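(* Let $I,S\ge 0$ and $j$ be integers with $L(I,S)\le j\le\lfloor I/2\rfloor$, and consider the pairing process described in the context. Let $B$ be a set of $j$ bb-pairings that is the set of bb-pairings of some possible wiring. The number of possible wirings whose set of bb-pairings is exactly $B$ equals $S!$ if $(I,S,j)$ is in the dagger case, and equals the number of ordered selections (dispositions) of $I-2j$ distinct elements from a set of $S$ elements, namely $\frac{S!}{(S-I+2j)!}$, otherwise.
   Context: Pairing process: there are $I$ infected devices $b_1,\dots,b_I$ and $S$ clean devices $w_1,\dots,w_S$. For $t=1,\dots,I$ in this order: if $b_t$ is not yet paired and at least one device other than $b_t$ is not yet paired, then $b_t$ chooses one of the currently unpaired devices other than itself uniformly at random, independently of previous choices, and becomes paired with it; otherwise $b_t$ does nothing. Each device belongs to at most one pair. The wiring is the final set of pairs; a bb-pairing is a pair consisting of two infected devices; a wiring is possible if it occurs with positive probability. $L(I,S)=0$ if $I\le S$; $L(I,S)=\frac{I-S}{2}$ if $I>S$ and $I-S$ is even; $L(I,S)=\frac{I-S-1}{2}$ if $I>S$ and $I-S$ is odd. $(I,S,j)$ is in the dagger case if $I>S$, $I+S$ is odd and $j=\frac{I-S-1}{2}$. *)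

theory Defs
  imports "HOL-Probability.Probability_Mass_Function"
begin

text \<open>Devices: infected devices Inf t (b_t, 1 \<le> t \<le> I) and clean devices Cln k (w_k, 1 \<le> k \<le> S).\<close>
datatype device = Inf nat | Cln nat

definition devices :: "nat \<Rightarrow> nat \<Rightarrow> device set" where
  "devices I S = Inf ` {1..I} \<union> Cln ` {1..S}"

text \<open>A (partial) wiring is a set of pairs; a pair is a two-element set of devices.\<close>
type_synonym wiring = "device set set"

definition unpaired :: "nat \<Rightarrow> nat \<Rightarrow> wiring \<Rightarrow> device set" where
  "unpaired I S P = devices I S - \<Union>P"

definition pair_step :: "nat \<Rightarrow> nat \<Rightarrow> nat \<Rightarrow> wiring \<Rightarrow> wiring pmf" where
  "pair_step I S t P =
     (if Inf t \<in> unpaired I S P \<and> unpaired I S P - {Inf t} \<noteq> {}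
      then map_pmf (\<lambda>d. insert {Inf t, d} P) (pmf_of_set (unpaired I S P - {Inf t}))
      else return_pmf P)"

fun pairing_upto :: "nat \<Rightarrow> nat \<Rightarrow> nat \<Rightarrow> wiring pmf" where
  "pairing_upto I S 0 = return_pmf {}"
| "pairing_upto I S (Suc t) = bind_pmf (pairing_upto I S t) (pair_step I S (Suc t))"

definition pairing_process :: "nat \<Rightarrow> nat \<Rightarrow> wiring pmf" where
  "pairing_process I S = pairing_upto I S I"

definition possible_wiring :: "nat \<Rightarrow> nat \<Rightarrow> wiring \<Rightarrow> bool" where
  "possible_wiring I S W \<longleftrightarrow> pmf (pairing_process I S) W > 0"

definition is_infected :: "device \<Rightarrow> bool" where
  "is_infected d \<longleftrightarrow> (\<exists>t. d = Inf t)"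

definition bb_pairings :: "wiring \<Rightarrow> wiring" where
  "bb_pairings W = {p \<in> W. \<forall>d\<in>p. is_infected d}"

definition L :: "nat \<Rightarrow> nat \<Rightarrow> nat" where
  "L I S = (if I \<le> S then 0
            else if even (I - S) then (I - S) div 2 else (I - S - 1) div 2)"

definition dagger_case :: "nat \<Rightarrow> nat \<Rightarrow> nat \<Rightarrow> bool" where
  "dagger_case I S j \<longleftrightarrow> I > S \<and> odd (I + S) \<and> j = (I - S - 1) div 2"

end

theory Submission
  imports Defs
begin

text \<open>
  The support of the process after t steps is characterised by an invariant (\<open>reachable\<close>):
  every pair was chosen by some b_s with s \<le> t, pairs are disjoint, and each b_s with s \<le> t is
  paired unless it was the last unpaired device at its own step.
  In a final wiring with bb-pairings B, let R be the set of the I - 2|B| infected devices outside B.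
  Every device of R is paired with a clean device, except that when |R| = S + 1 (the dagger case)
  the last device of R finds nobody left.  Hence the wirings with bb-pairings exactly B correspond
  bijectively to the injections from R (minus its maximum in the dagger case) into the S clean
  devices, which are counted by S!/(S - |R|)!, resp. S!.
\<close>

text \<open>When b_s acts, every infected device of smaller index is already paired, so it is never
  chosen as the partner of b_s; this also makes the chooser of a pair unique.\<close>
definition chosen_pair :: "nat \<Rightarrow> nat \<Rightarrow> nat \<Rightarrow> device set \<Rightarrow> bool" where
  "chosen_pair I S t p \<longleftrightarrow> (\<exists>s d. p = {Inf s, d} \<and> 1 \<le> s \<and> s \<le> t \<and> d \<in> devices I S
      \<and> d \<noteq> Inf s \<and> (\<forall>r. d = Inf r \<longrightarrow> s < r))"

text \<open>If b_s finds no other unpaired device, it is the only unpaired device, and nothing happens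
  afterwards: all pairs were chosen before step s.\<close>
definition reachable :: "nat \<Rightarrow> nat \<Rightarrow> nat \<Rightarrow> wiring \<Rightarrow> bool" where
  "reachable I S t P \<longleftrightarrow> (\<forall>p\<in>P. chosen_pair I S t p) \<and> pairwise disjnt P
     \<and> (\<forall>s\<in>{1..t}. Inf s \<in> \<Union>P \<or> (unpaired I S P = {Inf s} \<and> (\<forall>p\<in>P. chosen_pair I S (s - 1) p)))"

lemma finite_devices [simp]: "finite (devices I S)"
  by (simp add: devices_def)

lemma Inf_in_devices [simp]: "Inf s \<in> devices I S \<longleftrightarrow> 1 \<le> s \<and> s \<le> I"
  by (auto simp: devices_def)

lemma Cln_in_devices [simp]: "Cln k \<in> devices I S \<longleftrightarrow> 1 \<le> k \<and> k \<le> S"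
  by (auto simp: devices_def)

lemma finite_unpaired [simp]: "finite (unpaired I S P)"
  by (simp add: unpaired_def)

lemma set_pmf_pair_step:
  "set_pmf (pair_step I S t P) =
    (if Inf t \<in> unpaired I S P \<and> unpaired I S P - {Inf t} \<noteq> {}
     then (\<lambda>d. insert {Inf t, d} P) ` (unpaired I S P - {Inf t}) else {P})"
  by (simp add: pair_step_def)

lemma chosen_pairI:
  "1 \<le> s \<Longrightarrow> s \<le> t \<Longrightarrow> d \<in> devices I S \<Longrightarrow> d \<noteq> Inf s \<Longrightarrow> (\<forall>r. d = Inf r \<longrightarrow> s < r)
   \<Longrightarrow> chosen_pair I S t {Inf s, d}"
  unfolding chosen_pair_def by (rule exI[of _ s], rule exI[of _ d]) simp

lemma chosen_pairE:
  assumes "chosen_pair I S t p"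
  obtains s d where "p = {Inf s, d}" "1 \<le> s" "s \<le> t" "d \<in> devices I S" "d \<noteq> Inf s"
    "\<forall>r. d = Inf r \<longrightarrow> s < r"
  using assms unfolding chosen_pair_def by (elim exE conjE) (rule that; assumption)

lemma chosen_pair_mono: "chosen_pair I S t p \<Longrightarrow> t \<le> t' \<Longrightarrow> chosen_pair I S t' p"
  unfolding chosen_pair_def by (blast intro: order_trans)

lemma chosen_pair_Suc:
  assumes "chosen_pair I S (Suc t) p"
  shows "chosen_pair I S t p \<or> (\<exists>d. p = {Inf (Suc t), d} \<and> d \<noteq> Inf (Suc t) \<and> (\<forall>r. d = Inf r \<longrightarrow> Suc t < r))"
  using assms unfolding chosen_pair_def by (auto simp: le_Suc_eq)

lemma chooser_unique:
  assumes "{Inf s, d} = {Inf s', d'}" "d \<noteq> Inf s" "\<forall>r. d = Inf r \<longrightarrow> s < r"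
    "d' \<noteq> Inf s'" "\<forall>r. d' = Inf r \<longrightarrow> s' < r"
  shows "s = s' \<and> d = d'"
proof (cases "Inf s = Inf s'")
  case True
  then show ?thesis using assms(1) by (auto simp: doubleton_eq_iff)
next
  case False
  then have "Inf s = d'" "d = Inf s'" using assms(1) by (auto simp: doubleton_eq_iff)
  then show ?thesis using assms by auto
qed

lemma reachable_chosen: "reachable I S t P \<Longrightarrow> p \<in> P \<Longrightarrow> chosen_pair I S t p"
  unfolding reachable_def by (elim conjE) (erule bspec)

lemma reachable_disjoint: "reachable I S t P \<Longrightarrow> p \<in> P \<Longrightarrow> q \<in> P \<Longrightarrow> p \<noteq> q \<Longrightarrow> p \<inter> q = {}"
  unfolding reachable_def pairwise_def disjnt_def by (elim conjE) simp

lemma reachable_covered: "reachable I S t P \<Longrightarrow> s \<in> {1..t} \<Longrightarrow>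
   Inf s \<in> \<Union>P \<or> (unpaired I S P = {Inf s} \<and> (\<forall>p\<in>P. chosen_pair I S (s - 1) p))"
  unfolding reachable_def by (elim conjE) (erule bspec)

lemma reachableI:
  assumes "\<And>p. p \<in> P \<Longrightarrow> chosen_pair I S t p"
    and "\<And>p q. p \<in> P \<Longrightarrow> q \<in> P \<Longrightarrow> p \<noteq> q \<Longrightarrow> p \<inter> q = {}"
    and "\<And>s. s \<in> {1..t} \<Longrightarrow> Inf s \<in> \<Union>P \<or> (unpaired I S P = {Inf s} \<and> (\<forall>p\<in>P. chosen_pair I S (s - 1) p))"
  shows "reachable I S t P"
  unfolding reachable_def pairwise_def disjnt_def using assms by simp

lemma unpaired_Inf_later:
  assumes v: "reachable I S t P" and b: "Inf (Suc t) \<in> unpaired I S P"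
    and r: "Inf r \<in> unpaired I S P - {Inf (Suc t)}"
  shows "Suc t < r"
proof (rule ccontr)
  assume "\<not> Suc t < r"
  with r have "r \<in> {1..t}" by (auto simp: unpaired_def)
  then have "Inf r \<in> \<Union>P \<or> unpaired I S P = {Inf r}" using reachable_covered[OF v, of r] by blast
  then show False using r b by (auto simp: unpaired_def)
qed

lemma reachable_pair_step:
  assumes v: "reachable I S t P" and b: "Inf (Suc t) \<in> unpaired I S P"
    and d: "d \<in> unpaired I S P - {Inf (Suc t)}"
  shows "reachable I S (Suc t) (insert {Inf (Suc t), d} P)"
proof -
  have d_free: "d \<notin> \<Union>P" "d \<in> devices I S" "d \<noteq> Inf (Suc t)" using d by (auto simp: unpaired_def)
  have b_free: "Inf (Suc t) \<notin> \<Union>P" using b by (auto simp: unpaired_def)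
  have later: "\<forall>r. d = Inf r \<longrightarrow> Suc t < r" using unpaired_Inf_later[OF v b] d by blast
  show ?thesis
  proof (rule reachableI)
    fix p assume "p \<in> insert {Inf (Suc t), d} P"
    then consider "p = {Inf (Suc t), d}" | "p \<in> P" by blast
    then show "chosen_pair I S (Suc t) p"
    proof cases
      case 1
      then show ?thesis using later d_free by (simp add: chosen_pairI)
    next
      case 2
      then show ?thesis using chosen_pair_mono[OF reachable_chosen[OF v 2]] by simp
    qed
  next
    fix p q assume "p \<in> insert {Inf (Suc t), d} P" "q \<in> insert {Inf (Suc t), d} P" "p \<noteq> q"
    moreover have "{Inf (Suc t), d} \<inter> q = {}" if "q \<in> P" for q
      using that d_free(1) b_free by blast
    ultimately show "p \<inter> q = {}" using reachable_disjoint[OF v, of p q] by blast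
  next
    fix s assume s: "s \<in> {1..Suc t}"
    show "Inf s \<in> \<Union>(insert {Inf (Suc t), d} P) \<or> (unpaired I S (insert {Inf (Suc t), d} P) = {Inf s}
        \<and> (\<forall>p\<in>insert {Inf (Suc t), d} P. chosen_pair I S (s - 1) p))"
    proof (cases "s = Suc t")
      case False
      with s have "s \<in> {1..t}" by simp
      then have "Inf s \<in> \<Union>P \<or> unpaired I S P = {Inf s}" using reachable_covered[OF v, of s] by blast
      then show ?thesis using b False by auto
    qed simp
  qed
qed

lemma reachable_idle_step:
  assumes v: "reachable I S t P" and "Suc t \<le> I"
    and idle: "\<not> (Inf (Suc t) \<in> unpaired I S P \<and> unpaired I S P - {Inf (Suc t)} \<noteq> {})"
  shows "reachable I S (Suc t) P"
proof (rule reachableI)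
  fix p assume "p \<in> P"
  then show "chosen_pair I S (Suc t) p" using chosen_pair_mono[OF reachable_chosen[OF v]] by simp
next
  fix p q assume "p \<in> P" "q \<in> P" "p \<noteq> q"
  then show "p \<inter> q = {}" by (rule reachable_disjoint[OF v])
next
  fix s assume s: "s \<in> {1..Suc t}"
  show "Inf s \<in> \<Union>P \<or> (unpaired I S P = {Inf s} \<and> (\<forall>p\<in>P. chosen_pair I S (s - 1) p))"
  proof (cases "s = Suc t")
    case True
    have "Inf (Suc t) \<in> \<Union>P \<or> unpaired I S P = {Inf (Suc t)}"
      using idle \<open>Suc t \<le> I\<close> by (auto simp: unpaired_def)
    moreover have "\<forall>p\<in>P. chosen_pair I S t p" using reachable_chosen[OF v] by blast
    ultimately show ?thesis using True by auto
  next
    case False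
    with s show ?thesis using reachable_covered[OF v, of s] by simp
  qed
qed

lemma reachable_step:
  assumes "reachable I S t P" "Suc t \<le> I" "Q \<in> set_pmf (pair_step I S (Suc t) P)"
  shows "reachable I S (Suc t) Q"
  using assms reachable_pair_step[OF assms(1)] reachable_idle_step[OF assms(1,2)]
  by (auto simp: set_pmf_pair_step split: if_splits)

lemma reachable_remove_pair:
  assumes v: "reachable I S (Suc t) Q"
    and p: "{Inf (Suc t), d} \<in> Q" "d \<noteq> Inf (Suc t)" "\<forall>r. d = Inf r \<longrightarrow> Suc t < r"
  shows "reachable I S t (Q - {{Inf (Suc t), d}})"
proof (rule reachableI)
  fix q assume q: "q \<in> Q - {{Inf (Suc t), d}}"
  then have "q \<in> Q" "q \<noteq> {Inf (Suc t), d}" by auto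
  then have "Inf (Suc t) \<notin> q" using reachable_disjoint[OF v p(1)] by blast
  then show "chosen_pair I S t q" using chosen_pair_Suc[OF reachable_chosen[OF v \<open>q \<in> Q\<close>]] by auto
next
  fix q q' assume "q \<in> Q - {{Inf (Suc t), d}}" "q' \<in> Q - {{Inf (Suc t), d}}" "q \<noteq> q'"
  then show "q \<inter> q' = {}" using reachable_disjoint[OF v, of q q'] by blast
next
  fix s assume s: "s \<in> {1..t}"
  then have "Inf s \<in> \<Union>Q \<or> (unpaired I S Q = {Inf s} \<and> (\<forall>p\<in>Q. chosen_pair I S (s - 1) p))"
    using reachable_covered[OF v, of s] by auto
  then show "Inf s \<in> \<Union>(Q - {{Inf (Suc t), d}}) \<or> (unpaired I S (Q - {{Inf (Suc t), d}}) = {Inf s}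
      \<and> (\<forall>p\<in>Q - {{Inf (Suc t), d}}. chosen_pair I S (s - 1) p))"
  proof
    assume "Inf s \<in> \<Union>Q"
    then obtain q where q: "q \<in> Q" "Inf s \<in> q" by blast
    have "q \<noteq> {Inf (Suc t), d}" using q(2) s p(3) by auto
    with q show ?thesis by blast
  next
    assume "unpaired I S Q = {Inf s} \<and> (\<forall>p\<in>Q. chosen_pair I S (s - 1) p)"
    then have "chosen_pair I S (s - 1) {Inf (Suc t), d}" using p(1) by blast
    then obtain s' d' where "{Inf (Suc t), d} = {Inf s', d'}" "s' \<le> s - 1"
        "d' \<noteq> Inf s'" "\<forall>r. d' = Inf r \<longrightarrow> s' < r"
      by (rule chosen_pairE)
    with chooser_unique[OF _ p(2,3)] have "Suc t \<le> s - 1" by blast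
    with s have False by auto
    then show ?thesis ..
  qed
qed

lemma pair_step_remove_pair:
  assumes v: "reachable I S (Suc t) Q" and "Suc t \<le> I"
    and p: "{Inf (Suc t), d} \<in> Q" "d \<noteq> Inf (Suc t)" "\<forall>r. d = Inf r \<longrightarrow> Suc t < r"
  shows "Q \<in> set_pmf (pair_step I S (Suc t) (Q - {{Inf (Suc t), d}}))"
proof -
  let ?P = "Q - {{Inf (Suc t), d}}"
  obtain s' d' where "{Inf (Suc t), d} = {Inf s', d'}" "d' \<in> devices I S"
      "d' \<noteq> Inf s'" "\<forall>r. d' = Inf r \<longrightarrow> s' < r"
    using reachable_chosen[OF v p(1)] by (rule chosen_pairE)
  then have "d \<in> devices I S" using chooser_unique[OF _ p(2,3)] by blast
  moreover have "x \<notin> \<Union>?P" if "x \<in> {Inf (Suc t), d}" for x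
    using reachable_disjoint[OF v p(1)] that by blast
  ultimately have "Inf (Suc t) \<in> unpaired I S ?P" "d \<in> unpaired I S ?P - {Inf (Suc t)}"
    using \<open>Suc t \<le> I\<close> p(2) by (auto simp: unpaired_def)
  moreover have "Q = insert {Inf (Suc t), d} ?P" using p(1) by blast
  ultimately show ?thesis unfolding set_pmf_pair_step by auto
qed

lemma reachable_no_own_pair:
  assumes v: "reachable I S (Suc t) Q"
    and none: "\<nexists>d. {Inf (Suc t), d} \<in> Q \<and> d \<noteq> Inf (Suc t) \<and> (\<forall>r. d = Inf r \<longrightarrow> Suc t < r)"
  shows "reachable I S t Q" and "Q \<in> set_pmf (pair_step I S (Suc t) Q)"
proof -
  show "reachable I S t Q"
  proof (rule reachableI)
    fix q assume "q \<in> Q"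
    then show "chosen_pair I S t q" using chosen_pair_Suc[OF reachable_chosen[OF v \<open>q \<in> Q\<close>]] none by blast
  next
    fix q q' assume "q \<in> Q" "q' \<in> Q" "q \<noteq> q'"
    then show "q \<inter> q' = {}" by (rule reachable_disjoint[OF v])
  next
    fix s assume "s \<in> {1..t}"
    then show "Inf s \<in> \<Union>Q \<or> (unpaired I S Q = {Inf s} \<and> (\<forall>p\<in>Q. chosen_pair I S (s - 1) p))"
      using reachable_covered[OF v, of s] by auto
  qed
  have "Inf (Suc t) \<in> \<Union>Q \<or> unpaired I S Q = {Inf (Suc t)}"
    using reachable_covered[OF v, of "Suc t"] by auto
  then show "Q \<in> set_pmf (pair_step I S (Suc t) Q)"
    by (auto simp: set_pmf_pair_step unpaired_def)
qed

lemma set_pmf_pairing_upto: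
  "t \<le> I \<Longrightarrow> set_pmf (pairing_upto I S t) = {P. reachable I S t P}"
proof (induction t)
  case 0
  have "reachable I S 0 P \<longleftrightarrow> P = {}" for P
    using reachable_chosen[of I S 0 P] by (auto simp: chosen_pair_def intro: reachableI)
  then show ?case by auto
next
  case (Suc t)
  have "reachable I S (Suc t) Q \<longleftrightarrow> (\<exists>P. reachable I S t P \<and> Q \<in> set_pmf (pair_step I S (Suc t) P))"
    for Q
    using reachable_step[OF _ Suc.prems] reachable_remove_pair pair_step_remove_pair[OF _ Suc.prems]
      reachable_no_own_pair by metis
  with Suc show ?case by auto
qed

lemma possible_wiring_iff_reachable: "possible_wiring I S W \<longleftrightarrow> reachable I S I W"
  using set_pmf_pairing_upto[of I I S]
  by (simp add: possible_wiring_def pairing_process_def pmf_positive_iff)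

definition free_infected :: "nat \<Rightarrow> wiring \<Rightarrow> nat set" where
  "free_infected I B = {r \<in> {1..I}. Inf r \<notin> \<Union>B}"

lemma finite_free_infected [simp]: "finite (free_infected I B)"
  by (simp add: free_infected_def)

lemma bb_pairings_subset: "bb_pairings W \<subseteq> W"
  by (auto simp: bb_pairings_def)

lemma reachable_pair_subset_devices:
  assumes "reachable I S t W" "t \<le> I" "p \<in> W"
  shows "p \<subseteq> devices I S"
proof -
  obtain s d where "p = {Inf s, d}" "1 \<le> s" "s \<le> t" "d \<in> devices I S"
    using reachable_chosen[OF assms(1,3)] by (rule chosen_pairE)
  with \<open>t \<le> I\<close> show ?thesis by auto
qed

lemma reachable_finite:
  assumes "reachable I S t W" "t \<le> I"
  shows "finite W"
proof (rule finite_subset)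
  show "W \<subseteq> Pow (devices I S)" using reachable_pair_subset_devices[OF assms] by blast
qed simp

lemma bb_pairing_infected:
  assumes v: "reachable I S I W" and p: "p \<in> bb_pairings W"
  obtains s r where "p = {Inf s, Inf r}" "s \<in> {1..I}" "r \<in> {1..I}" "s \<noteq> r"
proof -
  have pW: "p \<in> W" and inf: "\<forall>d\<in>p. is_infected d" using p by (auto simp: bb_pairings_def)
  obtain s d where sd: "p = {Inf s, d}" "1 \<le> s" "s \<le> I" "d \<in> devices I S" "d \<noteq> Inf s"
    using reachable_chosen[OF v pW] by (rule chosen_pairE)
  then obtain r where "d = Inf r" using inf by (auto simp: is_infected_def)
  with sd that show ?thesis by auto
qed

lemma non_bb_pairing_clean:
  assumes v: "reachable I S I W" and p: "p \<in> W" "p \<notin> bb_pairings W"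
  obtains r k where "p = {Inf r, Cln k}" "r \<in> free_infected I (bb_pairings W)" "k \<in> {1..S}"
proof -
  obtain r d where rd: "p = {Inf r, d}" "1 \<le> r" "r \<le> I" "d \<in> devices I S"
    using reachable_chosen[OF v p(1)] by (rule chosen_pairE)
  obtain k where k: "d = Cln k"
    using rd p by (cases d) (auto simp: bb_pairings_def is_infected_def)
  have "Inf r \<notin> q" if "q \<in> bb_pairings W" for q
  proof -
    have "q \<noteq> p" using that p(2) by blast
    then show ?thesis using reachable_disjoint[OF v p(1), of q] that rd(1) bb_pairings_subset by blast
  qed
  then have "r \<in> free_infected I (bb_pairings W)" using rd by (auto simp: free_infected_def)
  with rd k that show ?thesis by auto
qed

lemma reachable_Cln_partner_unique:
  "reachable I S t W \<Longrightarrow> {Inf r, Cln k} \<in> W \<Longrightarrow> {Inf r', Cln k} \<in> W \<Longrightarrow> r = r'"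
  using reachable_disjoint[of I S t W "{Inf r, Cln k}" "{Inf r', Cln k}"] by auto

lemma reachable_Inf_partner_unique:
  "reachable I S t W \<Longrightarrow> {Inf r, Cln k} \<in> W \<Longrightarrow> {Inf r, Cln k'} \<in> W \<Longrightarrow> k = k'"
  using reachable_disjoint[of I S t W "{Inf r, Cln k}" "{Inf r, Cln k'}"] by auto

definition clean_partner :: "wiring \<Rightarrow> nat \<Rightarrow> nat" where
  "clean_partner W r = (SOME k. {Inf r, Cln k} \<in> W)"

lemma clean_partner_eq:
  assumes "reachable I S t W" "{Inf r, Cln k} \<in> W"
  shows "clean_partner W r = k"
proof -
  have "{Inf r, Cln (clean_partner W r)} \<in> W"
    unfolding clean_partner_def using assms(2) by (rule someI)
  with assms show ?thesis using reachable_Inf_partner_unique by blast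
qed

lemma clean_partner_mem:
  assumes v: "reachable I S I W" and r: "r \<in> free_infected I (bb_pairings W)" "Inf r \<in> \<Union>W"
  shows "{Inf r, Cln (clean_partner W r)} \<in> W" "clean_partner W r \<in> {1..S}"
proof -
  obtain p where p: "p \<in> W" "Inf r \<in> p" using r(2) by blast
  have "p \<notin> bb_pairings W" using r(1) p(2) by (auto simp: free_infected_def)
  then obtain r' k where "p = {Inf r', Cln k}" "k \<in> {1..S}"
    using non_bb_pairing_clean[OF v p(1)] by metis
  with p have "{Inf r, Cln k} \<in> W" "k \<in> {1..S}" by auto
  then show "{Inf r, Cln (clean_partner W r)} \<in> W" "clean_partner W r \<in> {1..S}"
    using clean_partner_eq[OF v] by auto
qed

lemma inj_on_clean_partner:
  assumes v: "reachable I S I W" and R: "R \<subseteq> free_infected I (bb_pairings W)" "\<forall>r\<in>R. Inf r \<in> \<Union>W"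
  shows "inj_on (clean_partner W) R"
proof
  fix x y assume "x \<in> R" "y \<in> R" "clean_partner W x = clean_partner W y"
  then show "x = y"
    using clean_partner_mem(1)[OF v] R reachable_Cln_partner_unique[OF v] by (metis subsetD)
qed

lemma card_paired_free_infected:
  assumes v: "reachable I S I W"
  shows "card {r \<in> free_infected I (bb_pairings W). Inf r \<in> \<Union>W} \<le> S"
proof -
  let ?C = "{r \<in> free_infected I (bb_pairings W). Inf r \<in> \<Union>W}"
  have "clean_partner W ` ?C \<subseteq> {1..S}" using clean_partner_mem(2)[OF v] by blast
  then have "card (clean_partner W ` ?C) \<le> S" using card_mono[of "{1..S}"] by fastforce
  moreover have "inj_on (clean_partner W) ?C" by (rule inj_on_clean_partner[OF v]) auto
  ultimately show ?thesis by (simp add: card_image)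
qed

lemma chosen_pair_Cln:
  assumes "chosen_pair I S t {Inf r, Cln k}"
  shows "r \<in> {1..t}"
proof -
  obtain s d where "{Inf r, Cln k} = {Inf s, d}" "1 \<le> s" "s \<le> t"
    using assms by (rule chosen_pairE)
  then show ?thesis by (simp add: doubleton_eq_iff)
qed

lemma paired_if_unpaired_singleton:
  assumes "unpaired I S W = {x}" "y \<in> devices I S" "y \<noteq> x"
  shows "y \<in> \<Union>W"
proof -
  have "y \<notin> unpaired I S W" using assms(1,3) by simp
  with assms(2) show ?thesis by (simp add: unpaired_def)
qed

lemma card_free_infected_if_unpaired:
  assumes v: "reachable I S I W"
    and r: "r \<in> free_infected I (bb_pairings W)" "Inf r \<notin> \<Union>W"
  shows "card (free_infected I (bb_pairings W)) = Suc S"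
proof -
  define R where "R = free_infected I (bb_pairings W)"
  define C where "C = R - {r}"
  have "r \<in> {1..I}" using r(1) by (simp add: free_infected_def)
  then have unp: "unpaired I S W = {Inf r}" using reachable_covered[OF v] r(2) by blast
  have C_paired: "Inf x \<in> \<Union>W" if "x \<in> C" for x
  proof -
    have "Inf x \<in> devices I S" "Inf x \<noteq> Inf r" using that by (auto simp: C_def R_def free_infected_def)
    with unp show ?thesis by (rule paired_if_unpaired_singleton)
  qed
  have C_R: "C \<subseteq> free_infected I (bb_pairings W)" unfolding C_def R_def by blast
  have "clean_partner W x \<in> {1..S}" if "x \<in> C" for x
    using clean_partner_mem(2)[OF v] C_R that C_paired[OF that] by blast
  then have "clean_partner W ` C \<subseteq> {1..S}" by (simp add: image_subsetI)
  moreover have "{1..S} \<subseteq> clean_partner W ` C"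
  proof
    fix k assume k: "k \<in> {1..S}"
    then have "Cln k \<in> \<Union>W" using paired_if_unpaired_singleton[OF unp] by simp
    then obtain p where p: "p \<in> W" "Cln k \<in> p" by blast
    have "p \<notin> bb_pairings W" using p(2) by (auto simp: bb_pairings_def is_infected_def)
    then obtain s k' where s: "p = {Inf s, Cln k'}" "s \<in> free_infected I (bb_pairings W)"
      "k' \<in> {1..S}"
      by (rule non_bb_pairing_clean[OF v p(1)])
    with p have ps: "{Inf s, Cln k} \<in> W" by auto
    have "s \<noteq> r" using ps r(2) by blast
    with s have "s \<in> C" by (simp add: C_def R_def)
    moreover have "clean_partner W s = k" by (rule clean_partner_eq[OF v ps])
    ultimately show "k \<in> clean_partner W ` C" by blast
  qed
  moreover have "inj_on (clean_partner W) C" by (rule inj_on_clean_partner[OF v C_R]) (use C_paired in blast)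
  ultimately have "card C = card {1..S}" by (metis card_image subset_antisym)
  then show ?thesis using card_Suc_Diff1[of R r] r(1) by (simp add: C_def R_def)
qed

lemma Max_free_infected_if_unpaired:
  assumes v: "reachable I S I W"
    and r: "r \<in> free_infected I (bb_pairings W)" "Inf r \<notin> \<Union>W"
  shows "r = Max (free_infected I (bb_pairings W))"
proof -
  have "r \<in> {1..I}" using r(1) by (simp add: free_infected_def)
  then have unp: "unpaired I S W = {Inf r}" and early: "\<forall>p\<in>W. chosen_pair I S (r - 1) p"
    using reachable_covered[OF v] r(2) by blast+
  have "x < r" if x: "x \<in> free_infected I (bb_pairings W)" "x \<noteq> r" for x
  proof -
    have "Inf x \<in> devices I S" using x(1) by (simp add: free_infected_def)
    moreover have "Inf x \<noteq> Inf r" using x(2) by simp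
    ultimately have "Inf x \<in> \<Union>W" by (rule paired_if_unpaired_singleton[OF unp])
    then have "{Inf x, Cln (clean_partner W x)} \<in> W" by (rule clean_partner_mem(1)[OF v x(1)])
    then have "x \<in> {1..r - 1}" using early by (blast intro: chosen_pair_Cln)
    then show ?thesis by auto
  qed
  then show ?thesis using r(1) by (intro Max_eqI[symmetric]) (auto simp: le_less)
qed

definition matched_infected :: "nat \<Rightarrow> nat \<Rightarrow> wiring \<Rightarrow> nat set" where
  "matched_infected I S B =
     (if card (free_infected I B) = Suc S then free_infected I B - {Max (free_infected I B)}
      else free_infected I B)"

lemma matched_infected_subset: "matched_infected I S B \<subseteq> free_infected I B"
  by (auto simp: matched_infected_def)

lemma paired_iff_matched_infected:
  assumes v: "reachable I S I W" and r: "r \<in> free_infected I (bb_pairings W)"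
  shows "Inf r \<in> \<Union>W \<longleftrightarrow> r \<in> matched_infected I S (bb_pairings W)"
proof
  assume paired: "Inf r \<in> \<Union>W"
  define R where "R = free_infected I (bb_pairings W)"
  show "r \<in> matched_infected I S (bb_pairings W)"
  proof (cases "card R = Suc S")
    case True
    then have "\<not> R \<subseteq> {r \<in> R. Inf r \<in> \<Union>W}"
      using card_mono[of "{r \<in> R. Inf r \<in> \<Union>W}" R] card_paired_free_infected[OF v]
      by (auto simp: R_def)
    then obtain r' where "r' \<in> R" "Inf r' \<notin> \<Union>W" by blast
    then have "r' = Max R" using Max_free_infected_if_unpaired[OF v] by (simp add: R_def)
    moreover have "r \<noteq> r'" using paired \<open>Inf r' \<notin> \<Union>W\<close> by blast
    ultimately show ?thesis using r True by (simp add: matched_infected_def R_def)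
  next
    case False
    then show ?thesis using r by (simp add: matched_infected_def R_def)
  qed
next
  assume matched: "r \<in> matched_infected I S (bb_pairings W)"
  show "Inf r \<in> \<Union>W"
  proof (rule ccontr)
    assume "Inf r \<notin> \<Union>W"
    with matched show False
      using card_free_infected_if_unpaired[OF v r] Max_free_infected_if_unpaired[OF v r]
      by (simp add: matched_infected_def)
  qed
qed

lemma card_matched_infected_le:
  assumes v: "reachable I S I W"
  shows "card (matched_infected I S (bb_pairings W)) \<le> S"
proof -
  have "matched_infected I S (bb_pairings W) \<subseteq> {r \<in> free_infected I (bb_pairings W). Inf r \<in> \<Union>W}"
    using paired_iff_matched_infected[OF v] matched_infected_subset by blast
  then have "card (matched_infected I S (bb_pairings W))
      \<le> card {r \<in> free_infected I (bb_pairings W). Inf r \<in> \<Union>W}"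
    by (rule card_mono[rotated]) simp
  with card_paired_free_infected[OF v] show ?thesis by linarith
qed

lemma card_free_infected:
  assumes v: "reachable I S I W"
  shows "card (free_infected I (bb_pairings W)) = I - 2 * card (bb_pairings W)"
proof -
  let ?B = "bb_pairings W"
  have sub: "\<Union>?B \<subseteq> Inf ` {1..I}" by (blast elim: bb_pairing_infected[OF v])
  have card2: "card p = 2" if "p \<in> ?B" for p
    using that by (auto elim: bb_pairing_infected[OF v])
  have "finite ?B" using reachable_finite[OF v order_refl] bb_pairings_subset by (rule finite_subset[rotated])
  have "card (\<Union>?B) = sum card ?B"
  proof (rule card_Union_disjoint)
    show "pairwise disjnt ?B"
      using reachable_disjoint[OF v] bb_pairings_subset by (fastforce simp: pairwise_def disjnt_def)
  qed (use card2 in \<open>auto intro: card_ge_0_finite\<close>)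
  also have "\<dots> = 2 * card ?B" using card2 by simp
  finally have card_U: "card (\<Union>?B) = 2 * card ?B" .
  have "Inf ` free_infected I ?B = Inf ` {1..I} - \<Union>?B" by (auto simp: free_infected_def)
  then have "card (free_infected I ?B) = card (Inf ` {1..I} - \<Union>?B)"
    by (metis card_image device.inject(1) inj_onI)
  also have "\<dots> = I - card (\<Union>?B)"
    using sub by (simp add: card_Diff_subset finite_subset card_image inj_on_def)
  finally show ?thesis using card_U by simp
qed

definition clean_pairs :: "nat set \<Rightarrow> (nat \<Rightarrow> nat) \<Rightarrow> wiring" where
  "clean_pairs M f = (\<lambda>r. {Inf r, Cln (f r)}) ` M"

lemma clean_pairs_cong: "(\<And>r. r \<in> M \<Longrightarrow> f r = g r) \<Longrightarrow> clean_pairs M f = clean_pairs M g"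
  unfolding clean_pairs_def by (rule image_cong) simp_all

lemma bb_pairings_idem: "bb_pairings (bb_pairings W) = bb_pairings W"
  by (auto simp: bb_pairings_def)

lemma bb_pairings_Un_clean_pairs: "bb_pairings (B \<union> clean_pairs M f) = bb_pairings B"
  by (auto simp: bb_pairings_def clean_pairs_def is_infected_def)

lemma reachable_decompose:
  assumes v: "reachable I S I W"
  defines "M \<equiv> matched_infected I S (bb_pairings W)"
  shows "restrict (clean_partner W) M \<in> M \<rightarrow>\<^sub>E {1..S}" "inj_on (clean_partner W) M"
    and "W = bb_pairings W \<union> clean_pairs M (clean_partner W)"
proof -
  have M_paired: "r \<in> free_infected I (bb_pairings W)" "Inf r \<in> \<Union>W" if "r \<in> M" for r
    using that paired_iff_matched_infected[OF v] matched_infected_subset unfolding M_def by blast+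
  show "restrict (clean_partner W) M \<in> M \<rightarrow>\<^sub>E {1..S}"
    using clean_partner_mem(2)[OF v] M_paired by simp
  show "inj_on (clean_partner W) M"
    by (rule inj_on_clean_partner[OF v]) (use M_paired in blast)+
  show "W = bb_pairings W \<union> clean_pairs M (clean_partner W)"
  proof (intro equalityI subsetI)
    fix p assume p: "p \<in> W"
    show "p \<in> bb_pairings W \<union> clean_pairs M (clean_partner W)"
    proof (cases "p \<in> bb_pairings W")
      case False
      then obtain r k where rk: "p = {Inf r, Cln k}" "r \<in> free_infected I (bb_pairings W)"
        by (rule non_bb_pairing_clean[OF v p])
      with p have "r \<in> M" using paired_iff_matched_infected[OF v] unfolding M_def by blast
      moreover have "clean_partner W r = k" using clean_partner_eq[OF v] p rk(1) by blast
      ultimately have "p \<in> clean_pairs M (clean_partner W)" using rk(1) unfolding clean_pairs_def by blast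
      then show ?thesis ..
    qed simp
  next
    fix p assume "p \<in> bb_pairings W \<union> clean_pairs M (clean_partner W)"
    then show "p \<in> W"
      using bb_pairings_subset clean_partner_mem(1)[OF v] M_paired by (auto simp: clean_pairs_def)
  qed
qed

lemma clean_pairs_disjoint:
  assumes v: "reachable I S I W" and M: "M \<subseteq> free_infected I (bb_pairings W)" and f: "inj_on f M"
    and pq: "p \<in> bb_pairings W \<union> clean_pairs M f" "q \<in> bb_pairings W \<union> clean_pairs M f" "p \<noteq> q"
  shows "p \<inter> q = {}"
proof -
  have mixed: "{Inf r, Cln (f r)} \<inter> q = {}" if "r \<in> M" "q \<in> bb_pairings W" for r q
  proof -
    have "Inf r \<notin> q" using that M by (auto simp: free_infected_def)
    moreover have "Cln (f r) \<notin> q" using that(2) by (auto simp: bb_pairings_def is_infected_def)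
    ultimately show ?thesis by auto
  qed
  have clean: "{Inf r, Cln (f r)} \<inter> {Inf r', Cln (f r')} = {}" if "r \<in> M" "r' \<in> M" "r \<noteq> r'" for r r'
    using that inj_onD[OF f, of r r'] by auto
  from pq show ?thesis
    using reachable_disjoint[OF v, of p q] bb_pairings_subset mixed[of _ p] mixed[of _ q] clean
    unfolding clean_pairs_def by blast
qed

lemma dagger_free_infected:
  assumes v: "reachable I S I W" and card_R: "card (free_infected I (bb_pairings W)) = Suc S"
  defines "R \<equiv> free_infected I (bb_pairings W)"
  shows "Max R \<in> R" "matched_infected I S (bb_pairings W) = R - {Max R}"
    "unpaired I S W = {Inf (Max R)}" "\<forall>p\<in>W. chosen_pair I S (Max R - 1) p"
proof -
  have "R \<noteq> {}" using card_R unfolding R_def by auto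
  then show max: "Max R \<in> R" by (simp add: R_def)
  show matched: "matched_infected I S (bb_pairings W) = R - {Max R}"
    using card_R by (simp add: matched_infected_def R_def)
  have "Inf (Max R) \<notin> \<Union>W" using paired_iff_matched_infected[OF v] max matched unfolding R_def by blast
  moreover have "Max R \<in> {1..I}" using max by (simp add: R_def free_infected_def)
  ultimately show "unpaired I S W = {Inf (Max R)}" "\<forall>p\<in>W. chosen_pair I S (Max R - 1) p"
    using reachable_covered[OF v, of "Max R"] by blast+
qed

lemma unpaired_compose_dagger:
  assumes v: "reachable I S I W" and card_R: "card (free_infected I (bb_pairings W)) = Suc S"
  defines "R \<equiv> free_infected I (bb_pairings W)" and "M \<equiv> matched_infected I S (bb_pairings W)"
  assumes f: "f \<in> M \<rightarrow>\<^sub>E {1..S}" "inj_on f M"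
  shows "unpaired I S (bb_pairings W \<union> clean_pairs M f) = {Inf (Max R)}"
proof (intro equalityI subsetI)
  note dagger = dagger_free_infected[OF v card_R, folded R_def M_def]
  let ?W = "bb_pairings W \<union> clean_pairs M f"
  fix x assume x: "x \<in> unpaired I S ?W"
  then have x_dev: "x \<in> devices I S" and x_free: "x \<notin> \<Union>?W" by (auto simp: unpaired_def)
  show "x \<in> {Inf (Max R)}"
  proof (cases x)
    case (Inf y)
    have "y \<in> {1..I}" using x_dev Inf by simp
    moreover have "y \<notin> M" using x_free Inf by (auto simp: clean_pairs_def)
    moreover have "Inf y \<notin> \<Union>(bb_pairings W)" using x_free Inf by blast
    ultimately have "y = Max R" using dagger(2) by (auto simp: R_def free_infected_def)
    then show ?thesis using Inf by simp
  next
    case (Cln k)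
    have "card M = S" using dagger(1,2) card_R by (simp add: R_def)
    then have "f ` M = {1..S}"
      using card_image[OF f(2)] f(1) by (intro card_subset_eq) auto
    then have "k \<in> f ` M" using x_dev Cln by simp
    then have "x \<in> \<Union>(clean_pairs M f)" using Cln by (auto simp: clean_pairs_def)
    with x_free show ?thesis by blast
  qed
next
  note dagger = dagger_free_infected[OF v card_R, folded R_def M_def]
  fix x assume "x \<in> {Inf (Max R)}"
  moreover have "Max R \<in> {1..I}" "Inf (Max R) \<notin> \<Union>(bb_pairings W)"
    using dagger(1) by (simp_all add: R_def free_infected_def)
  moreover have "Inf (Max R) \<notin> \<Union>(clean_pairs M f)" using dagger(2) by (auto simp: clean_pairs_def)
  ultimately show "x \<in> unpaired I S (bb_pairings W \<union> clean_pairs M f)" by (auto simp: unpaired_def)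
qed

lemma chosen_pair_compose_dagger:
  assumes v: "reachable I S I W" and card_R: "card (free_infected I (bb_pairings W)) = Suc S"
  defines "R \<equiv> free_infected I (bb_pairings W)" and "M \<equiv> matched_infected I S (bb_pairings W)"
  assumes f: "f \<in> M \<rightarrow>\<^sub>E {1..S}" and p: "p \<in> bb_pairings W \<union> clean_pairs M f"
  shows "chosen_pair I S (Max R - 1) p"
proof -
  note dagger = dagger_free_infected[OF v card_R, folded R_def M_def]
  from p consider "p \<in> bb_pairings W" | r where "r \<in> M" "p = {Inf r, Cln (f r)}"
    by (auto simp: clean_pairs_def)
  then show ?thesis
  proof cases
    case 1
    then show ?thesis using dagger(4) bb_pairings_subset by blast
  next
    case (2 r)
    have "r \<in> R" "r \<noteq> Max R" using 2(1) dagger(2) by auto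
    moreover have "r \<le> Max R" using \<open>r \<in> R\<close> by (simp add: R_def)
    moreover have "1 \<le> r" "f r \<in> {1..S}" using \<open>r \<in> R\<close> 2(1) f by (auto simp: R_def free_infected_def)
    ultimately show ?thesis unfolding 2(2) by (intro chosen_pairI) auto
  qed
qed

lemma reachable_compose:
  assumes v: "reachable I S I W"
  defines "M \<equiv> matched_infected I S (bb_pairings W)"
  assumes f: "f \<in> M \<rightarrow>\<^sub>E {1..S}" "inj_on f M"
  shows "reachable I S I (bb_pairings W \<union> clean_pairs M f)"
proof (rule reachableI)
  have M_free: "M \<subseteq> free_infected I (bb_pairings W)" unfolding M_def by (rule matched_infected_subset)
  fix p assume "p \<in> bb_pairings W \<union> clean_pairs M f"
  then consider "p \<in> bb_pairings W" | r where "r \<in> M" "p = {Inf r, Cln (f r)}"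
    by (auto simp: clean_pairs_def)
  then show "chosen_pair I S I p"
  proof cases
    case 1
    then show ?thesis using reachable_chosen[OF v] bb_pairings_subset by blast
  next
    case (2 r)
    then have "r \<in> {1..I}" "f r \<in> {1..S}" using M_free f(1) by (auto simp: free_infected_def)
    then show ?thesis unfolding 2(2) by (intro chosen_pairI) auto
  qed
next
  fix p q assume "p \<in> bb_pairings W \<union> clean_pairs M f" "q \<in> bb_pairings W \<union> clean_pairs M f" "p \<noteq> q"
  then show "p \<inter> q = {}"
    using clean_pairs_disjoint[OF v _ f(2)] matched_infected_subset unfolding M_def by blast
next
  fix s assume s: "s \<in> {1..I}"
  let ?W = "bb_pairings W \<union> clean_pairs M f"
  show "Inf s \<in> \<Union>?W \<or> (unpaired I S ?W = {Inf s} \<and> (\<forall>p\<in>?W. chosen_pair I S (s - 1) p))"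
  proof (cases "s \<in> free_infected I (bb_pairings W) - M")
    case True
    then have card_R: "card (free_infected I (bb_pairings W)) = Suc S"
      by (auto simp: M_def matched_infected_def split: if_splits)
    with True have "s = Max (free_infected I (bb_pairings W))"
      using dagger_free_infected(2)[OF v card_R] unfolding M_def by blast
    then show ?thesis
      using unpaired_compose_dagger[OF v card_R f[unfolded M_def]]
        chosen_pair_compose_dagger[OF v card_R f(1)[unfolded M_def]] unfolding M_def by simp
  next
    case False
    then have "s \<in> M \<or> Inf s \<in> \<Union>(bb_pairings W)" using s by (auto simp: free_infected_def)
    then show ?thesis by (auto simp: clean_pairs_def)
  qed
qed

lemma inj_on_clean_pairs_Un:
  assumes "bb_pairings B = B"
  shows "inj_on (\<lambda>f. B \<union> clean_pairs M f) (M \<rightarrow>\<^sub>E C)"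
proof
  fix f g assume f: "f \<in> M \<rightarrow>\<^sub>E C" and g: "g \<in> M \<rightarrow>\<^sub>E C"
    and eq: "B \<union> clean_pairs M f = B \<union> clean_pairs M g"
  show "f = g"
  proof (rule extensionalityI)
    show "f \<in> extensional M" "g \<in> extensional M" using f g by (auto simp: PiE_def)
    fix x assume x: "x \<in> M"
    have "{Inf x, Cln (f x)} \<notin> bb_pairings B" by (simp add: bb_pairings_def is_infected_def)
    then have "{Inf x, Cln (f x)} \<notin> B" using assms by simp
    moreover have "{Inf x, Cln (f x)} \<in> B \<union> clean_pairs M g" using x eq by (auto simp: clean_pairs_def)
    ultimately obtain y where "{Inf x, Cln (f x)} = {Inf y, Cln (g y)}" by (auto simp: clean_pairs_def)
    then show "f x = g x" by (simp add: doubleton_eq_iff) (metis)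
  qed
qed

lemma prod_diff_mult_fact: "k \<le> n \<Longrightarrow> prod ((-) n) {0..<k} * fact (n - k) = (fact n :: nat)"
proof (induction k)
  case (Suc k)
  have "n - k = Suc (n - Suc k)" using Suc.prems by simp
  then have "fact (n - k) = (n - k) * (fact (n - Suc k) :: nat)" by (metis fact_Suc of_nat_id)
  with Suc show ?case by (simp add: algebra_simps)
qed simp

lemma card_inj_on_PiE:
  assumes "finite A" "finite C" "card A \<le> card C"
  shows "card {f \<in> A \<rightarrow>\<^sub>E C. inj_on f A} = fact (card C) div fact (card C - card A)"
proof -
  have "card {f \<in> A \<rightarrow>\<^sub>E C. inj_on f A} = prod ((-) (card C)) {0..<card A}"
    using card_inj_on_subset_funcset[OF assms(1,2) order_refl] by simp
  also have "\<dots> = fact (card C) div fact (card C - card A)"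
    using prod_diff_mult_fact[OF assms(3)] by (metis fact_nonzero nonzero_mult_div_cancel_right)
  finally show ?thesis .
qed

lemma card_reachable_with_bb_pairings:
  assumes v: "reachable I S I W"
  shows "card {W'. reachable I S I W' \<and> bb_pairings W' = bb_pairings W}
    = fact S div fact (S - card (matched_infected I S (bb_pairings W)))"
proof -
  define B where "B = bb_pairings W"
  define M where "M = matched_infected I S B"
  define F where "F = {f \<in> M \<rightarrow>\<^sub>E {1..S}. inj_on f M}"
  have "{W'. reachable I S I W' \<and> bb_pairings W' = B} = (\<lambda>f. B \<union> clean_pairs M f) ` F"
  proof (intro equalityI subsetI)
    fix W' assume "W' \<in> {W'. reachable I S I W' \<and> bb_pairings W' = B}"
    then have v': "reachable I S I W'" and B': "bb_pairings W' = B" by auto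
    note decompose = reachable_decompose[OF v', unfolded B', folded M_def]
    have "restrict (clean_partner W') M \<in> F"
      using decompose(1,2) by (simp add: F_def)
    moreover have "W' = B \<union> clean_pairs M (restrict (clean_partner W') M)"
      using decompose(3) clean_pairs_cong[of M "restrict (clean_partner W') M" "clean_partner W'"] by simp
    ultimately show "W' \<in> (\<lambda>f. B \<union> clean_pairs M f) ` F" by blast
  next
    fix W' assume "W' \<in> (\<lambda>f. B \<union> clean_pairs M f) ` F"
    then obtain f where "f \<in> F" "W' = B \<union> clean_pairs M f" by blast
    then show "W' \<in> {W'. reachable I S I W' \<and> bb_pairings W' = B}"
      using reachable_compose[OF v] bb_pairings_Un_clean_pairs bb_pairings_idem
      by (simp add: F_def M_def B_def)
  qed
  moreover have "inj_on (\<lambda>f. B \<union> clean_pairs M f) F"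
    using inj_on_clean_pairs_Un[of B M "{1..S}"] bb_pairings_idem
    by (auto simp: F_def B_def intro: inj_on_subset)
  ultimately have "card {W'. reachable I S I W' \<and> bb_pairings W' = B} = card F"
    by (simp add: card_image)
  also have "\<dots> = fact S div fact (S - card M)"
    using card_inj_on_PiE[of M "{1..S}"] card_matched_infected_le[OF v]
    by (simp add: F_def M_def B_def finite_subset[OF matched_infected_subset])
  finally show ?thesis by (simp add: B_def M_def)
qed

lemma card_matched_infected:
  assumes v: "reachable I S I W"
  shows "card (matched_infected I S (bb_pairings W)) =
    (if I - 2 * card (bb_pairings W) = Suc S then S else I - 2 * card (bb_pairings W))"
proof (cases "I - 2 * card (bb_pairings W) = Suc S")
  case True
  then have card_R: "card (free_infected I (bb_pairings W)) = Suc S" using card_free_infected[OF v] by simp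
  with dagger_free_infected(1,2)[OF v card_R] True show ?thesis by simp
next
  case False
  then show ?thesis using card_free_infected[OF v] by (simp add: matched_infected_def)
qed

lemma dagger_case_iff:
  assumes "2 * j \<le> I"
  shows "dagger_case I S j \<longleftrightarrow> I - 2 * j = Suc S"
  using assms unfolding dagger_case_def by (auto elim!: oddE) presburger+

theorem lemma6:
  fixes I S j :: nat and B :: "device set set"
  assumes "L I S \<le> j" and "j \<le> I div 2"
    and "card B = j"
    and "\<exists>W. possible_wiring I S W \<and> bb_pairings W = B"
  shows "card {W. possible_wiring I S W \<and> bb_pairings W = B} =
           (if dagger_case I S j then fact S else fact S div fact (S - (I - 2 * j)))"
proof -
  obtain W where W: "reachable I S I W" "bb_pairings W = B"
    using assms(4) possible_wiring_iff_reachable by blast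
  have "2 * j \<le> I" using assms(2) by linarith
  then have "card (matched_infected I S B) = (if dagger_case I S j then S else I - 2 * j)"
    using card_matched_infected[OF W(1)] W(2) assms(3) dagger_case_iff by simp
  then show ?thesis
    using card_reachable_with_bb_pairings[OF W(1)] W(2) possible_wiring_iff_reachable by simp
qed

end
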